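(* Let $k\ge 3$, let $\mathbf{v}^i,\mathbf{w}^i\in\mathbb{C}^{n_i}$ ($i=1,\dots,k$) with $\mathbf{v}^i,\mathbf{w}^i$ linearly independent for every $i$, $V_i=\langle\mathbf{v}^i,\mathbf{w}^i\rangle$, and $T=\sum_{i=1}^k \mathbf{v}^1\otimes\cdots\otimes\mathbf{w}^i\otimes\cdots\otimes\mathbf{v}^k$ (with $\mathbf{w}^i$ in the $i$-th slot). Let $P=\mathbf{p}^1\otimes\cdots\otimes\mathbf{p}^k$ with $\mathbf{p}^i\in V_i$ nonzero and $\mathbf{p}^i$ not a scalar multiple of $\mathbf{v}^i$ for every $i=1,\dots,k$. Then there is $\lambda\in\mathbb{C}$ with $\mathrm{rk}(T-\lambda P)=\mathrm{rk}(T)-1$, i.e. $P$ belongs to the decomposition locus of $T$.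
   Context: The rank of a tensor is the minimal number of rank-one tensors $\mathbf{u}^1\otimes\cdots\otimes\mathbf{u}^k$ summing to it. A rank-one tensor $P$ is in the decomposition locus of $T$ if $\mathrm{rk}(T-\lambda P)=\mathrm{rk}(T)-1$ for some $\lambda\in\mathbb{C}$. *)

theory Defs
  imports Complex_Main
begin

text \<open>Tensors in C^{n_0} x ... x C^{n_{k-1}} (factors indexed 0..k-1) are represented
  as functions from multi-indices (nat => nat) to complex; only valid multi-indices matter.
  A family of vectors is u :: nat => nat => complex, u i j = j-th coordinate of the i-th vector.\<close>

definition valid_idx :: "nat \<Rightarrow> (nat \<Rightarrow> nat) \<Rightarrow> (nat \<Rightarrow> nat) \<Rightarrow> bool" where
  "valid_idx k n idx \<longleftrightarrow> (\<forall>i<k. idx i < n i)"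

definition rank_one :: "nat \<Rightarrow> (nat \<Rightarrow> nat \<Rightarrow> complex) \<Rightarrow> (nat \<Rightarrow> nat) \<Rightarrow> complex" where
  "rank_one k u = (\<lambda>idx. \<Prod>i<k. u i (idx i))"

definition trank :: "nat \<Rightarrow> (nat \<Rightarrow> nat) \<Rightarrow> ((nat \<Rightarrow> nat) \<Rightarrow> complex) \<Rightarrow> nat" where
  "trank k n T = (LEAST r. \<exists>us :: nat \<Rightarrow> nat \<Rightarrow> nat \<Rightarrow> complex.
      \<forall>idx. valid_idx k n idx \<longrightarrow> T idx = (\<Sum>j<r. rank_one k (us j) idx))"

definition lin_indep2 :: "nat \<Rightarrow> (nat \<Rightarrow> complex) \<Rightarrow> (nat \<Rightarrow> complex) \<Rightarrow> bool" where
  "lin_indep2 m x y \<longleftrightarrow> (\<forall>a b. (\<forall>j<m. a * x j + b * y j = 0) \<longrightarrow> a = 0 \<and> b = 0)"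

definition in_span2 :: "nat \<Rightarrow> (nat \<Rightarrow> complex) \<Rightarrow> (nat \<Rightarrow> complex) \<Rightarrow> (nat \<Rightarrow> complex) \<Rightarrow> bool" where
  "in_span2 m x y z \<longleftrightarrow> (\<exists>a b. \<forall>j<m. z j = a * x j + b * y j)"

definition in_decomposition_locus ::
  "nat \<Rightarrow> (nat \<Rightarrow> nat) \<Rightarrow> ((nat \<Rightarrow> nat) \<Rightarrow> complex) \<Rightarrow> ((nat \<Rightarrow> nat) \<Rightarrow> complex) \<Rightarrow> bool" where
  "in_decomposition_locus k n T P \<longleftrightarrow>
     (\<exists>c::complex. trank k n (\<lambda>idx. T idx - c * P idx) = trank k n T - 1)"

end

theory Submission
  imports Defs "HOL-Computational_Algebra.Polynomial" "HOL-Library.FuncSet"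
begin

text \<open>
  In coordinates dual to the bases \<open>v\<^sup>i, w\<^sup>i\<close> of the \<open>V\<^sub>i\<close>, the tensor \<open>T\<close> becomes the
  W-form \<open>W(a, b) = \<Sum>\<^sub>i b\<^sub>i \<Prod>\<^sub>l\<^sub>\<noteq>\<^sub>i a\<^sub>l\<close>, a rank-one tensor becomes a product of linear forms,
  and \<open>P\<close> becomes a nonzero multiple of \<open>\<Prod>\<^sub>i (b\<^sub>i + e\<^sub>i a\<^sub>i)\<close>.

  \<open>W(a, b)\<close> is the coefficient of \<open>x\<close> in \<open>F(x) = \<Prod>\<^sub>i (a\<^sub>i + x y\<^sub>i)\<close> for \<open>y = b + d a\<close> whenever
  \<open>\<Sum>\<^sub>i d\<^sub>i = 0\<close>, and a discrete Fourier filter over the \<open>N\<close>-th roots of unity extracts it from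
  \<open>N\<close> values of \<open>F\<close>, each a product of linear forms. If \<open>\<Sum>\<^sub>i e\<^sub>i = 0\<close>, take \<open>d = e\<close> and
  \<open>N = k - 1\<close>: the filter also picks up the top coefficient \<open>\<Prod>\<^sub>i y\<^sub>i\<close>, a multiple of \<open>P\<close>.
  Otherwise shift \<open>e\<close> to some \<open>d\<close> with \<open>\<Sum>\<^sub>i d\<^sub>i = 0\<close>, take \<open>N = k\<close> and evaluate at
  \<open>t \<omega>\<^sup>j\<close> with \<open>t\<close> chosen so that the value for \<open>j = 0\<close> is a multiple of \<open>P\<close>. Either way
  \<open>T - \<lambda>P\<close> is a sum of \<open>k - 1\<close> rank-one tensors.

  Conversely \<open>W(a, b) + c \<Prod>\<^sub>i a\<^sub>i\<close> is never a sum of fewer than \<open>k\<close> products of linear forms: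
  specialising the last pair of variables to a zero of the last factor of one summand removes
  that summand and leaves a form of the same shape in one variable pair fewer. Hence
  \<open>rk T = k\<close>, and \<open>rk (T - \<lambda>P) = k - 1\<close> because subtracting a rank-one tensor lowers the
  rank by at most one.
\<close>

section \<open>The W-form and its generating polynomial\<close>

definition W_form :: "nat \<Rightarrow> (nat \<Rightarrow> 'a) \<Rightarrow> (nat \<Rightarrow> 'a) \<Rightarrow> 'a::comm_ring_1" where
  "W_form k a b = (\<Sum>i<k. \<Prod>l<k. if l = i then b l else a l)"

lemma W_form_Suc: "W_form (Suc k) a b = b k * (\<Prod>l<k. a l) + a k * W_form k a b"
proof -
  have "(\<Prod>l<k. if l = k then b l else a l) = (\<Prod>l<k. a l)"
    by (rule prod.cong) auto
  then show ?thesis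
    by (simp add: W_form_def sum_distrib_left mult_ac)
qed

lemma W_form_cong:
  "(\<And>i. i < k \<Longrightarrow> a i = a' i) \<Longrightarrow> (\<And>i. i < k \<Longrightarrow> b i = b' i) \<Longrightarrow> W_form k a b = W_form k a' b'"
  unfolding W_form_def by (auto intro!: sum.cong prod.cong)

lemma W_form_shift:
  "W_form k a (\<lambda>i. b i + d i * a i) = W_form k a b + (\<Sum>i<k. d i) * (\<Prod>l<k. a l)"
  by (induction k) (simp_all add: W_form_Suc W_form_def[of 0] algebra_simps)

definition linear_factors_poly :: "nat \<Rightarrow> (nat \<Rightarrow> 'a) \<Rightarrow> (nat \<Rightarrow> 'a) \<Rightarrow> 'a::comm_ring_1 poly" where
  "linear_factors_poly k a b = (\<Prod>i<k. [:a i, b i:])"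

lemma linear_factors_poly_Suc:
  "linear_factors_poly (Suc k) a b =
     smult (a k) (linear_factors_poly k a b) + pCons 0 (smult (b k) (linear_factors_poly k a b))"
  by (simp add: linear_factors_poly_def)

lemma poly_linear_factors_poly: "poly (linear_factors_poly k a b) x = (\<Prod>i<k. a i + x * b i)"
  by (simp add: linear_factors_poly_def poly_prod)

lemma degree_linear_factors_poly_le: "degree (linear_factors_poly k a b) \<le> k"
proof (induction k)
  case (Suc k)
  have "linear_factors_poly (Suc k) a b = linear_factors_poly k a b * [:a k, b k:]"
    by (simp add: linear_factors_poly_def)
  then have "degree (linear_factors_poly (Suc k) a b)
               \<le> degree (linear_factors_poly k a b) + degree [:a k, b k:]"
    by (simp only: degree_mult_le)
  with Suc show ?case by (simp split: if_splits)
qed (simp add: linear_factors_poly_def)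

lemma coeff_linear_factors_poly_0: "coeff (linear_factors_poly k a b) 0 = (\<Prod>l<k. a l)"
  by (induction k) (simp_all add: linear_factors_poly_Suc linear_factors_poly_def[of 0])

lemma coeff_linear_factors_poly_1: "coeff (linear_factors_poly k a b) 1 = W_form k a b"
  by (induction k)
    (simp_all add: linear_factors_poly_Suc linear_factors_poly_def[of 0] W_form_Suc
      coeff_linear_factors_poly_0 W_form_def[of 0] algebra_simps)

lemma coeff_linear_factors_poly_top: "coeff (linear_factors_poly k a b) k = (\<Prod>l<k. b l)"
proof (induction k)
  case (Suc k)
  have "coeff (linear_factors_poly k a b) (Suc k) = 0"
    using degree_linear_factors_poly_le[of k a b] by (simp add: coeff_eq_0)
  then show ?case using Suc by (simp add: linear_factors_poly_Suc)
qed (simp add: linear_factors_poly_def)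

section \<open>Filtering coefficients with roots of unity\<close>

definition unit_root :: "nat \<Rightarrow> complex" where
  "unit_root N = cis (2 * pi / real N)"

lemma unit_root_power: "unit_root N ^ m = cis (2 * pi * real m / real N)"
  by (simp add: unit_root_def DeMoivre mult_ac)

lemma unit_root_power_eq_1_iff:
  assumes "N > 0"
  shows "unit_root N ^ m = 1 \<longleftrightarrow> N dvd m"
proof -
  have N: "unit_root N ^ N = 1"
    using assms by (simp add: unit_root_power complex_eq_iff)
  have "unit_root N ^ m = unit_root N ^ (m mod N) * (unit_root N ^ N) ^ (m div N)"
    by (metis mod_div_mult_eq power_add power_mult mult.commute)
  then have "unit_root N ^ m = 1 \<longleftrightarrow>
               cis (2 * pi * real (m mod N) / real N) = cis (2 * pi * real 0 / real N)"
    by (simp add: N unit_root_power)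
  also have "\<dots> \<longleftrightarrow> m mod N = 0"
    using bij_betw_roots_unity[OF assms] assms unfolding bij_betw_def inj_on_def
    by (metis lessThan_iff mod_less_divisor)
  finally show ?thesis by auto
qed

lemma sum_unit_root_powers:
  assumes "N > 0"
  shows "(\<Sum>j<N. unit_root N ^ (j * a)) = (if N dvd a then of_nat N else 0)"
proof (cases "N dvd a")
  case True
  then have "unit_root N ^ (j * a) = 1" for j
    using unit_root_power_eq_1_iff[OF assms] by simp
  then show ?thesis
    using True by simp
next
  case False
  then have "unit_root N ^ a \<noteq> 1"
    using unit_root_power_eq_1_iff[OF assms] by simp
  have "(\<Sum>j<N. unit_root N ^ (j * a)) = (\<Sum>j<N. (unit_root N ^ a) ^ j)"
    by (intro sum.cong refl) (metis power_mult mult.commute)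
  also have "\<dots> = ((unit_root N ^ a) ^ N - 1) / (unit_root N ^ a - 1)"
    by (rule geometric_sum) fact
  also have "(unit_root N ^ a) ^ N = 1"
    using unit_root_power_eq_1_iff[OF assms] by (simp flip: power_mult)
  finally show ?thesis
    using False by simp
qed

text \<open>The weight \<open>\<omega>\<^sup>j\<^sup>(\<^sup>N\<^sup>-\<^sup>1\<^sup>)\<close> equals \<open>\<omega>\<^sup>-\<^sup>j\<close>, so the filter keeps exactly the coefficients of
  the monomials \<open>x\<^sup>m\<close> with \<open>m \<equiv> 1 (mod N)\<close>.\<close>

lemma roots_of_unity_filter:
  assumes "N > 0" "degree p \<le> K"
  shows "(\<Sum>j<N. unit_root N ^ (j * (N - 1)) * poly p (t * unit_root N ^ j))
       = of_nat N * (\<Sum>m\<le>K. if N dvd m + N - 1 then coeff p m * t ^ m else 0)"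
proof -
  have poly_p: "poly p x = (\<Sum>m\<le>K. coeff p m * x ^ m)" for x
    using arg_cong[OF poly_as_sum_of_monoms'[OF assms(2)], of "\<lambda>q. poly q x"]
    by (simp add: poly_sum poly_monom)
  have monomial: "unit_root N ^ (j * (N - 1)) * (coeff p m * (t * unit_root N ^ j) ^ m)
          = coeff p m * t ^ m * unit_root N ^ (j * (m + N - 1))" for j m
  proof -
    have "m + N - 1 = m + (N - 1)"
      using assms(1) by simp
    then show ?thesis
      by (simp only: distrib_left power_add power_mult power_mult_distrib mult_ac)
  qed
  have "(\<Sum>j<N. unit_root N ^ (j * (N - 1)) * poly p (t * unit_root N ^ j))
      = (\<Sum>j<N. \<Sum>m\<le>K. coeff p m * t ^ m * unit_root N ^ (j * (m + N - 1)))"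
    by (simp only: poly_p sum_distrib_left monomial)
  also have "\<dots> = (\<Sum>m\<le>K. coeff p m * t ^ m * (\<Sum>j<N. unit_root N ^ (j * (m + N - 1))))"
    by (subst sum.swap) (simp add: sum_distrib_left)
  also have "\<dots> = of_nat N * (\<Sum>m\<le>K. if N dvd m + N - 1 then coeff p m * t ^ m else 0)"
    by (simp add: sum_unit_root_powers[OF assms(1)] sum_distrib_left if_distrib mult_ac cong: if_cong)
  finally show ?thesis .
qed

lemma dvd_add_pred_iff:
  fixes N m :: nat
  assumes "N \<ge> 2" "m \<le> N + 1"
  shows "N dvd m + N - 1 \<longleftrightarrow> m = 1 \<or> m = N + 1"
proof
  assume "N dvd m + N - 1"
  then obtain q where q: "m + N - 1 = N * q" by blast
  with assms have "q \<noteq> 0" by (cases q) auto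
  moreover from assms q have "\<not> 3 \<le> q"
    using mult_le_mono2[of 3 q N] by linarith
  ultimately have "q = 1 \<or> q = 2" by auto
  with q assms show "m = 1 \<or> m = N + 1" by auto
qed (use assms in auto)

lemma roots_of_unity_filter_coeff_1:
  assumes "N \<ge> 2" "degree p \<le> N + 1"
  shows "(\<Sum>j<N. unit_root N ^ (j * (N - 1)) * poly p (t * unit_root N ^ j))
       = of_nat N * (coeff p 1 * t + coeff p (N + 1) * t ^ (N + 1))"
proof -
  have "(\<Sum>j<N. unit_root N ^ (j * (N - 1)) * poly p (t * unit_root N ^ j))
      = of_nat N * (\<Sum>m\<le>N + 1. if N dvd m + N - 1 then coeff p m * t ^ m else 0)"
    using assms by (intro roots_of_unity_filter) auto
  also have "(\<Sum>m\<le>N + 1. if N dvd m + N - 1 then coeff p m * t ^ m else 0)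
      = (\<Sum>m\<le>N + 1. (if m = 1 then coeff p m * t ^ m else 0)
                        + (if m = N + 1 then coeff p m * t ^ m else 0))"
    by (intro sum.cong) (use assms(1) dvd_add_pred_iff[OF assms(1)] in auto)
  also have "\<dots> = coeff p 1 * t + coeff p (N + 1) * t ^ (N + 1)"
    using assms(1) by (simp add: sum.distrib sum.delta)
  finally show ?thesis .
qed

lemma W_form_plus_prod_eq_roots_of_unity_sum:
  fixes V Y :: "nat \<Rightarrow> complex"
  assumes "N \<ge> 2"
  shows "of_nat N * (W_form (N + 1) V Y + (\<Prod>i<N + 1. Y i))
       = (\<Sum>j<N. unit_root N ^ (j * (N - 1)) * (\<Prod>i<N + 1. V i + unit_root N ^ j * Y i))"
proof -
  let ?F = "linear_factors_poly (N + 1) V Y"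
  have "(\<Sum>j<N. unit_root N ^ (j * (N - 1)) * poly ?F (1 * unit_root N ^ j))
      = of_nat N * (coeff ?F 1 * 1 + coeff ?F (N + 1) * 1 ^ (N + 1))"
    using assms degree_linear_factors_poly_le by (rule roots_of_unity_filter_coeff_1)
  then show ?thesis
    by (simp only: poly_linear_factors_poly coeff_linear_factors_poly_1
        coeff_linear_factors_poly_top) simp
qed

lemma W_form_eq_roots_of_unity_sum:
  fixes V Z :: "nat \<Rightarrow> complex"
  assumes "k \<ge> 2"
  shows "of_nat k * t * W_form k V Z
       = (\<Sum>j<k. unit_root k ^ (j * (k - 1)) * (\<Prod>i<k. V i + t * unit_root k ^ j * Z i))"
proof -
  let ?F = "linear_factors_poly k V Z"
  have "degree ?F \<le> k + 1"
    using degree_linear_factors_poly_le[of k V Z] by simp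
  then have "(\<Sum>j<k. unit_root k ^ (j * (k - 1)) * poly ?F (t * unit_root k ^ j))
      = of_nat k * (coeff ?F 1 * t + coeff ?F (k + 1) * t ^ (k + 1))"
    using assms by (intro roots_of_unity_filter_coeff_1)
  moreover have "coeff ?F (k + 1) = 0"
    using degree_linear_factors_poly_le[of k V Z] by (simp add: coeff_eq_0)
  ultimately show ?thesis
    by (simp only: poly_linear_factors_poly coeff_linear_factors_poly_1) (simp add: mult_ac)
qed

section \<open>Decompositions of the W-form into products of linear forms\<close>

lemma W_form_minus_prod_decomp_sum_zero:
  fixes e :: "nat \<Rightarrow> complex"
  assumes "k \<ge> 3" "(\<Sum>i<k. e i) = 0"
  shows "\<exists>c \<gamma> \<alpha> \<beta>. \<forall>V W. W_form k V W - c * (\<Prod>i<k. W i + e i * V i)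
           = (\<Sum>j<k - 1. \<gamma> j * (\<Prod>i<k. \<alpha> j i * V i + \<beta> j i * W i))"
proof -
  define N where "N = k - 1"
  define \<omega> where "\<omega> = unit_root N"
  have N: "N \<ge> 2" "k = N + 1"
    using assms(1) by (auto simp: N_def)
  define \<gamma> where "\<gamma> j = \<omega> ^ (j * (N - 1)) / of_nat N" for j
  have decomp: "W_form k V W - (-1) * (\<Prod>i<k. W i + e i * V i)
      = (\<Sum>j<k - 1. \<gamma> j * (\<Prod>i<k. (1 + \<omega> ^ j * e i) * V i + \<omega> ^ j * W i))"
    for V W
  proof -
    define Y where "Y = (\<lambda>i. W i + e i * V i)"
    have "W_form k V Y = W_form k V W"
      using W_form_shift[of k V W e] assms(2) by (simp add: Y_def)
    moreover have "V i + \<omega> ^ j * Y i = (1 + \<omega> ^ j * e i) * V i + \<omega> ^ j * W i" for i j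
      by (simp add: Y_def algebra_simps)
    ultimately have "of_nat N * (W_form k V W + (\<Prod>i<k. Y i))
        = (\<Sum>j<N. \<omega> ^ (j * (N - 1)) * (\<Prod>i<k. (1 + \<omega> ^ j * e i) * V i + \<omega> ^ j * W i))"
      using W_form_plus_prod_eq_roots_of_unity_sum[OF N(1), of V Y] by (simp add: N(2) \<omega>_def)
    then show ?thesis
      using N by (simp add: Y_def \<gamma>_def times_divide_eq_left eq_divide_eq mult.commute
          flip: sum_divide_distrib)
  qed
  show ?thesis
    by (rule exI[of _ "-1"], rule exI[of _ \<gamma>], intro exI allI, rule decomp)
qed

lemma W_form_minus_prod_decomp_sum_nonzero:
  fixes e :: "nat \<Rightarrow> complex"
  assumes "k \<ge> 3" "(\<Sum>i<k. e i) \<noteq> 0"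
  shows "\<exists>c \<gamma> \<alpha> \<beta>. \<forall>V W. W_form k V W - c * (\<Prod>i<k. W i + e i * V i)
           = (\<Sum>j<k - 1. \<gamma> j * (\<Prod>i<k. \<alpha> j i * V i + \<beta> j i * W i))"
proof -
  define s where "s = (\<Sum>i<k. e i)"
  \<comment> \<open>\<open>t\<close> makes the term \<open>j = 0\<close> of the filter the multiple \<open>t\<^sup>k \<Prod>\<^sub>i (W\<^sub>i + e\<^sub>i V\<^sub>i)\<close> of \<open>P\<close>\<close>
  define t where "t = of_nat k / s"
  define d where "d i = e i - s / of_nat k" for i
  define \<omega> where "\<omega> = unit_root k"
  define \<gamma> where "\<gamma> j = \<omega> ^ (Suc j * (k - 1)) / (of_nat k * t)" for j
  have k: "k = Suc (k - 1)" "(of_nat k :: complex) \<noteq> 0"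
    using assms(1) by auto
  have t: "t \<noteq> 0" "t * s / of_nat k = 1"
    using assms(2) k(2) by (simp_all add: t_def s_def)
  have decomp: "W_form k V W - (t ^ (k - 1) / of_nat k) * (\<Prod>i<k. W i + e i * V i)
      = (\<Sum>j<k - 1. \<gamma> j * (\<Prod>i<k. (1 + t * \<omega> ^ Suc j * d i) * V i + t * \<omega> ^ Suc j * W i))"
    for V W
  proof -
    define Z where "Z = (\<lambda>i. W i + d i * V i)"
    have "(\<Sum>i<k. d i) = 0"
      using k(2) by (simp add: d_def sum_subtractf s_def)
    then have W_form_Z: "W_form k V Z = W_form k V W"
      using W_form_shift[of k V W d] by (simp add: Z_def)
    have "V i + t * Z i = t * (W i + e i * V i) + (1 - t * s / of_nat k) * V i" for i
      by (simp add: Z_def d_def algebra_simps)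
    then have "(\<Prod>i<k. V i + t * Z i) = t ^ k * (\<Prod>i<k. W i + e i * V i)"
      using t(2) by (simp add: prod.distrib)
    also have "t ^ k = t * t ^ (k - 1)"
      by (metis k(1) power_Suc)
    finally have first_term: "(\<Prod>i<k. V i + t * Z i) = t * t ^ (k - 1) * (\<Prod>i<k. W i + e i * V i)" .
    have "of_nat k * t * W_form k V W
        = (\<Sum>j<k. \<omega> ^ (j * (k - 1)) * (\<Prod>i<k. V i + t * \<omega> ^ j * Z i))"
      using W_form_eq_roots_of_unity_sum[of k t V Z] assms(1) by (simp add: \<omega>_def W_form_Z)
    also have "\<dots> = t * t ^ (k - 1) * (\<Prod>i<k. W i + e i * V i)
        + (\<Sum>j<k - 1. \<omega> ^ (Suc j * (k - 1)) * (\<Prod>i<k. V i + t * \<omega> ^ Suc j * Z i))"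
      by (subst k(1), subst sum.lessThan_Suc_shift) (simp add: first_term)
    finally have "of_nat k * t * W_form k V W = \<dots>" .
    moreover have "x - b / a * p = S / (a * t)" if "a * t * x = t * b * p + S" "a \<noteq> 0" "t \<noteq> 0"
      for a t x b p S :: complex
      using that by (simp add: field_simps)
    ultimately have "W_form k V W - (t ^ (k - 1) / of_nat k) * (\<Prod>i<k. W i + e i * V i)
        = (\<Sum>j<k - 1. \<omega> ^ (Suc j * (k - 1)) * (\<Prod>i<k. V i + t * \<omega> ^ Suc j * Z i)) / (of_nat k * t)"
      using k(2) t(1) by blast
    also have "\<dots> = (\<Sum>j<k - 1. \<gamma> j * (\<Prod>i<k. V i + t * \<omega> ^ Suc j * Z i))"
      by (simp add: \<gamma>_def sum_divide_distrib times_divide_eq_left)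
    also have "\<dots> = (\<Sum>j<k - 1. \<gamma> j * (\<Prod>i<k. (1 + t * \<omega> ^ Suc j * d i) * V i + t * \<omega> ^ Suc j * W i))"
      by (simp add: Z_def algebra_simps)
    finally show ?thesis .
  qed
  show ?thesis
    by (rule exI[of _ "t ^ (k - 1) / of_nat k"], rule exI[of _ \<gamma>], intro exI allI, rule decomp)
qed

lemma W_form_minus_prod_decomp:
  fixes e :: "nat \<Rightarrow> complex"
  assumes "k \<ge> 3"
  shows "\<exists>c \<gamma> \<alpha> \<beta>. \<forall>V W. W_form k V W - c * (\<Prod>i<k. W i + e i * V i)
           = (\<Sum>j<k - 1. \<gamma> j * (\<Prod>i<k. \<alpha> j i * V i + \<beta> j i * W i))"
  using W_form_minus_prod_decomp_sum_zero[OF assms] W_form_minus_prod_decomp_sum_nonzero[OF assms]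
  by blast

lemma W_form_decomp_last_coeff_nonzero:
  fixes \<gamma> :: "'b \<Rightarrow> 'a::field" and \<alpha> \<beta> :: "'b \<Rightarrow> nat \<Rightarrow> 'a"
  assumes "\<forall>a b. W_form (Suc k) a b + c * (\<Prod>l<Suc k. a l)
             = (\<Sum>j\<in>J. \<gamma> j * (\<Prod>i<Suc k. \<alpha> j i * a i + \<beta> j i * b i))"
  shows "\<exists>j\<in>J. \<gamma> j * \<beta> j k \<noteq> 0"
proof (rule ccontr)
  assume "\<not> ?thesis"
  then have zero: "\<gamma> j * \<beta> j k = 0" if "j \<in> J" for j
    using that by blast
  define a :: "nat \<Rightarrow> 'a" where "a l = (if l = k then 0 else 1)" for l
  define b :: "nat \<Rightarrow> 'a" where "b l = (if l = k then 1 else 0)" for l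
  have "(\<Prod>l<k. a l) = 1"
    by (rule prod.neutral) (simp add: a_def)
  then have "W_form (Suc k) a b + c * (\<Prod>l<Suc k. a l) = 1"
    by (simp add: W_form_Suc a_def b_def)
  moreover have "(\<Sum>j\<in>J. \<gamma> j * (\<Prod>i<Suc k. \<alpha> j i * a i + \<beta> j i * b i)) = 0"
    using zero by (intro sum.neutral) (simp add: a_def b_def mult.left_commute[of "\<gamma> _"])
  ultimately show False
    using assms[rule_format, of a b] by simp
qed

lemma W_form_decomp_reduce:
  fixes \<gamma> :: "'b \<Rightarrow> 'a::field" and \<alpha> \<beta> :: "'b \<Rightarrow> nat \<Rightarrow> 'a"
  assumes "finite J"
    and decomp: "\<forall>a b. W_form (Suc k) a b + c * (\<Prod>l<Suc k. a l)
             = (\<Sum>j\<in>J. \<gamma> j * (\<Prod>i<Suc k. \<alpha> j i * a i + \<beta> j i * b i))"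
  shows "\<exists>j0\<in>J. \<exists>c' \<gamma>'. \<forall>a b. W_form k a b + c' * (\<Prod>l<k. a l)
             = (\<Sum>j\<in>J - {j0}. \<gamma>' j * (\<Prod>i<k. \<alpha> j i * a i + \<beta> j i * b i))"
proof -
  let ?P = "\<lambda>j a b. \<Prod>i<k. \<alpha> j i * a i + \<beta> j i * b i"
  have last_slot: "b k * (\<Prod>l<k. a l) + a k * W_form k a b + c * (\<Prod>l<k. a l) * a k
      = (\<Sum>j\<in>J. \<gamma> j * ?P j a b * (\<alpha> j k * a k + \<beta> j k * b k))" for a b
    using decomp[rule_format, of a b] by (simp add: W_form_Suc mult.assoc)
  obtain j0 where j0: "j0 \<in> J" "\<gamma> j0 * \<beta> j0 k \<noteq> 0"
    using W_form_decomp_last_coeff_nonzero[OF decomp] by blast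
  define a0 where "a0 = \<alpha> j0 k"
  define b0 where "b0 = \<beta> j0 k"
  define \<gamma>' where "\<gamma>' j = \<gamma> j * (\<alpha> j k * b0 - \<beta> j k * a0) / b0" for j
  have b0: "b0 \<noteq> 0"
    using j0 by (simp add: b0_def)
  have "W_form k a b + (c - a0 / b0) * (\<Prod>l<k. a l) = (\<Sum>j\<in>J - {j0}. \<gamma>' j * ?P j a b)" for a b
  proof -
    \<comment> \<open>this value of the last variable pair kills the summand \<open>j0\<close>\<close>
    define a' where "a' = a(k := b0)"
    define b' where "b' = b(k := - a0)"
    have "W_form k a' b' = W_form k a b"
      by (rule W_form_cong) (auto simp: a'_def b'_def)
    moreover have "(\<Prod>l<k. a' l) = (\<Prod>l<k. a l)" "?P j a' b' = ?P j a b" for j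
      by (auto simp: a'_def b'_def intro!: prod.cong)
    ultimately have "- a0 * (\<Prod>l<k. a l) + b0 * W_form k a b + c * (\<Prod>l<k. a l) * b0
        = (\<Sum>j\<in>J. \<gamma> j * ?P j a b * (\<alpha> j k * b0 - \<beta> j k * a0))"
      using last_slot[where a=a' and b=b'] by (simp add: a'_def b'_def)
    moreover have "b0 * (W_form k a b + (c - a0 / b0) * (\<Prod>l<k. a l))
        = - a0 * (\<Prod>l<k. a l) + b0 * W_form k a b + c * (\<Prod>l<k. a l) * b0"
      using b0 by (simp add: field_simps)
    ultimately have "b0 * (W_form k a b + (c - a0 / b0) * (\<Prod>l<k. a l))
        = (\<Sum>j\<in>J. \<gamma> j * ?P j a b * (\<alpha> j k * b0 - \<beta> j k * a0))"
      by simp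
    also have "\<dots> = b0 * (\<Sum>j\<in>J. \<gamma>' j * ?P j a b)"
      unfolding sum_distrib_left using b0 by (intro sum.cong) (simp_all add: \<gamma>'_def)
    also have "(\<Sum>j\<in>J. \<gamma>' j * ?P j a b) = (\<Sum>j\<in>J - {j0}. \<gamma>' j * ?P j a b)"
      using j0(1) assms(1) by (simp add: sum.remove \<gamma>'_def a0_def b0_def)
    finally show ?thesis
      using b0 by simp
  qed
  then show ?thesis
    using j0(1) by blast
qed

lemma W_form_decomp_card_ge:
  fixes \<gamma> :: "'b \<Rightarrow> 'a::field" and \<alpha> \<beta> :: "'b \<Rightarrow> nat \<Rightarrow> 'a"
  assumes "finite J"
    and "\<forall>a b. W_form k a b + c * (\<Prod>l<k. a l)
             = (\<Sum>j\<in>J. \<gamma> j * (\<Prod>i<k. \<alpha> j i * a i + \<beta> j i * b i))"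
  shows "k \<le> card J"
  using assms
proof (induction k arbitrary: c J \<gamma>)
  case (Suc k)
  obtain j0 c' \<gamma>' where j0: "j0 \<in> J"
    and "\<forall>a b. W_form k a b + c' * (\<Prod>l<k. a l)
             = (\<Sum>j\<in>J - {j0}. \<gamma>' j * (\<Prod>i<k. \<alpha> j i * a i + \<beta> j i * b i))"
    using W_form_decomp_reduce[OF Suc.prems] by blast
  then have "k \<le> card (J - {j0})"
    using Suc.prems(1) by (intro Suc.IH) auto
  then show ?case
    using j0 Suc.prems(1) card_Diff1_less[of J j0] by simp
qed simp

section \<open>Tensor rank of the W-tensor\<close>

definition W_tensor ::
  "nat \<Rightarrow> (nat \<Rightarrow> nat \<Rightarrow> complex) \<Rightarrow> (nat \<Rightarrow> nat \<Rightarrow> complex) \<Rightarrow> (nat \<Rightarrow> nat) \<Rightarrow> complex" where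
  "W_tensor k v w = (\<lambda>idx. \<Sum>i<k. rank_one k (\<lambda>l. if l = i then w l else v l) idx)"

lemma W_tensor_eq_W_form: "W_tensor k v w idx = W_form k (\<lambda>l. v l (idx l)) (\<lambda>l. w l (idx l))"
  unfolding W_tensor_def rank_one_def W_form_def by (intro sum.cong prod.cong) auto

lemma smult_rank_one:
  assumes "0 < k"
  shows "c * rank_one k u idx = rank_one k (u(0 := (\<lambda>j. c * u 0 j))) idx"
proof -
  obtain m where "k = Suc m"
    using assms gr0_implies_Suc by blast
  then show ?thesis
    by (simp add: rank_one_def prod.lessThan_Suc_shift mult.assoc del: prod.lessThan_Suc)
qed

lemma trank_le:
  fixes us :: "nat \<Rightarrow> nat \<Rightarrow> nat \<Rightarrow> complex"
  assumes "\<forall>idx. valid_idx k n idx \<longrightarrow> T idx = (\<Sum>j<r. rank_one k (us j) idx)"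
  shows "trank k n T \<le> r"
  unfolding trank_def by (rule Least_le) (use assms in blast)

lemma trank_decomp:
  assumes "\<exists>us :: nat \<Rightarrow> nat \<Rightarrow> nat \<Rightarrow> complex. \<forall>idx. valid_idx k n idx \<longrightarrow> T idx = (\<Sum>j<r. rank_one k (us j) idx)"
  shows "\<exists>us. \<forall>idx. valid_idx k n idx \<longrightarrow> T idx = (\<Sum>j<trank k n T. rank_one k (us j) idx)"
proof -
  let ?P = "\<lambda>r::nat. \<exists>us::nat \<Rightarrow> nat \<Rightarrow> nat \<Rightarrow> complex. \<forall>idx. valid_idx k n idx \<longrightarrow> T idx = (\<Sum>j<r. rank_one k (us j) idx)"
  from assms have "?P (LEAST r. ?P r)"
    by (rule LeastI)
  then show ?thesis
    by (simp only: trank_def)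
qed

lemma trank_le_Suc_trank_minus_rank_one:
  assumes "0 < k"
    and "\<exists>us :: nat \<Rightarrow> nat \<Rightarrow> nat \<Rightarrow> complex. \<forall>idx. valid_idx k n idx \<longrightarrow>
           T idx - c * rank_one k p idx = (\<Sum>j<r. rank_one k (us j) idx)"
  shows "trank k n T \<le> Suc (trank k n (\<lambda>idx. T idx - c * rank_one k p idx))"
proof -
  let ?m = "trank k n (\<lambda>idx. T idx - c * rank_one k p idx)"
  obtain us where us: "\<forall>idx. valid_idx k n idx \<longrightarrow>
      T idx - c * rank_one k p idx = (\<Sum>j<?m. rank_one k (us j) idx)"
    using trank_decomp[OF assms(2)] by blast
  define us' where "us' = us(?m := p(0 := (\<lambda>j. c * p 0 j)))"
  have "\<forall>idx. valid_idx k n idx \<longrightarrow> T idx = (\<Sum>j<Suc ?m. rank_one k (us' j) idx)"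
    using us smult_rank_one[OF assms(1), of c p] by (simp add: us'_def algebra_simps)
  then show ?thesis
    by (rule trank_le)
qed

definition contract ::
  "nat \<Rightarrow> (nat \<Rightarrow> nat) \<Rightarrow> ((nat \<Rightarrow> nat) \<Rightarrow> complex) \<Rightarrow> (nat \<Rightarrow> nat \<Rightarrow> complex) \<Rightarrow> complex" where
  "contract k n X \<chi> = (\<Sum>idx\<in>PiE {..<k} (\<lambda>i. {..<n i}). X idx * (\<Prod>i<k. \<chi> i (idx i)))"

lemma contract_rank_one: "contract k n (rank_one k u) \<chi> = (\<Prod>i<k. \<Sum>j<n i. u i j * \<chi> i j)"
  by (simp add: contract_def rank_one_def prod_sum_PiE prod.distrib)

lemma contract_cong:
  assumes "\<forall>idx. valid_idx k n idx \<longrightarrow> X idx = Y idx"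
  shows "contract k n X \<chi> = contract k n Y \<chi>"
  unfolding contract_def using assms by (intro sum.cong) (auto simp: valid_idx_def PiE_iff)

lemma contract_sum: "contract k n (\<lambda>idx. \<Sum>j\<in>J. X j idx) \<chi> = (\<Sum>j\<in>J. contract k n (X j) \<chi>)"
  unfolding contract_def by (simp add: sum_distrib_right sum.swap[of _ "PiE _ _"])

lemma lin_indep2_nonzero_minor:
  assumes "lin_indep2 m x y"
  shows "\<exists>j1<m. \<exists>j2<m. x j1 * y j2 - x j2 * y j1 \<noteq> 0"
proof -
  have "\<not> (\<forall>j<m. 1 * x j + 0 * y j = 0)"
    using assms unfolding lin_indep2_def by (metis one_neq_zero)
  then obtain j1 where j1: "j1 < m" "x j1 \<noteq> 0"
    by auto
  have "\<not> (\<forall>j<m. y j1 * x j + (- x j1) * y j = 0)"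
    using assms j1(2) unfolding lin_indep2_def by (metis neg_equal_0_iff_equal)
  then show ?thesis
    using j1(1) by (auto simp: algebra_simps)
qed

lemma lin_indep2_dual_functionals:
  assumes "lin_indep2 m x y"
  shows "\<exists>\<phi> \<psi>. (\<Sum>j<m. x j * \<phi> j) = 1 \<and> (\<Sum>j<m. y j * \<phi> j) = 0
             \<and> (\<Sum>j<m. x j * \<psi> j) = 0 \<and> (\<Sum>j<m. y j * \<psi> j) = 1"
proof -
  obtain j1 j2 where j: "j1 < m" "j2 < m" and D: "x j1 * y j2 - x j2 * y j1 \<noteq> 0"
    using lin_indep2_nonzero_minor[OF assms] by blast
  then have "j1 \<noteq> j2"
    by auto
  have two_point: "(\<Sum>j<m. z j * (if j = j1 then A else if j = j2 then B else 0)) = z j1 * A + z j2 * B"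
    for z :: "nat \<Rightarrow> complex" and A B
  proof -
    have "(\<Sum>j<m. z j * (if j = j1 then A else if j = j2 then B else 0))
        = (\<Sum>j<m. (if j = j1 then z j * A else 0) + (if j = j2 then z j * B else 0))"
      using \<open>j1 \<noteq> j2\<close> by (intro sum.cong) auto
    then show ?thesis
      using j by (simp add: sum.distrib)
  qed
  let ?D = "x j1 * y j2 - x j2 * y j1"
  define \<phi> where "\<phi> j = (if j = j1 then y j2 / ?D else if j = j2 then - y j1 / ?D else 0)" for j
  define \<psi> where "\<psi> j = (if j = j1 then - x j2 / ?D else if j = j2 then x j1 / ?D else 0)" for j
  have "(\<Sum>j<m. x j * \<phi> j) = 1" "(\<Sum>j<m. y j * \<phi> j) = 0"
    "(\<Sum>j<m. x j * \<psi> j) = 0" "(\<Sum>j<m. y j * \<psi> j) = 1"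
    unfolding \<phi>_def \<psi>_def two_point using D
    by (simp_all add: add_divide_distrib[symmetric] diff_divide_distrib[symmetric] mult.commute)
  then show ?thesis
    by (intro exI[of _ \<phi>] exI[of _ \<psi>]) simp
qed

lemma W_tensor_decomp_length_ge:
  fixes us :: "nat \<Rightarrow> nat \<Rightarrow> nat \<Rightarrow> complex"
  assumes indep: "\<forall>i<k. lin_indep2 (n i) (v i) (w i)"
    and decomp: "\<forall>idx. valid_idx k n idx \<longrightarrow> W_tensor k v w idx = (\<Sum>j<r. rank_one k (us j) idx)"
  shows "k \<le> r"
proof -
  have "\<forall>i. \<exists>\<phi> \<psi>. i < k \<longrightarrow> (\<Sum>j<n i. v i j * \<phi> j) = 1 \<and> (\<Sum>j<n i. w i j * \<phi> j) = 0
      \<and> (\<Sum>j<n i. v i j * \<psi> j) = 0 \<and> (\<Sum>j<n i. w i j * \<psi> j) = 1"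
    using indep lin_indep2_dual_functionals by blast
  then obtain \<phi> \<psi> where dual: "\<And>i. i < k \<Longrightarrow> (\<Sum>j<n i. v i j * \<phi> i j) = 1 \<and> (\<Sum>j<n i. w i j * \<phi> i j) = 0
      \<and> (\<Sum>j<n i. v i j * \<psi> i j) = 0 \<and> (\<Sum>j<n i. w i j * \<psi> i j) = 1"
    unfolding choice_iff by auto
  \<comment> \<open>contracting with the covectors \<open>a\<^sub>i \<phi>\<^sub>i + b\<^sub>i \<psi>\<^sub>i\<close> turns the decomposition into an identity of forms\<close>
  let ?f = "\<lambda>i u. \<Sum>j<n i. u j * \<phi> i j" and ?g = "\<lambda>i u. \<Sum>j<n i. u j * \<psi> i j"
  have "W_form k a b + 0 * (\<Prod>l<k. a l)
      = (\<Sum>j\<in>{..<r}. 1 * (\<Prod>i<k. ?f i (us j i) * a i + ?g i (us j i) * b i))" for a b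
  proof -
    define \<chi> where "\<chi> i j = a i * \<phi> i j + b i * \<psi> i j" for i j
    have rank_one_contracted: "contract k n (rank_one k u) \<chi> = (\<Prod>i<k. ?f i (u i) * a i + ?g i (u i) * b i)" for u
      by (simp add: contract_rank_one \<chi>_def distrib_left sum.distrib sum_distrib_left mult_ac)
    have "contract k n (rank_one k (\<lambda>l. if l = i then w l else v l)) \<chi>
        = (\<Prod>l<k. if l = i then b l else a l)" for i
      unfolding rank_one_contracted by (rule prod.cong) (use dual in auto)
    then have "W_form k a b = contract k n (W_tensor k v w) \<chi>"
      by (simp add: W_tensor_def contract_sum W_form_def)
    also have "\<dots> = contract k n (\<lambda>idx. \<Sum>j<r. rank_one k (us j) idx) \<chi>"
      using decomp by (rule contract_cong)
    also have "\<dots> = (\<Sum>j<r. \<Prod>i<k. ?f i (us j i) * a i + ?g i (us j i) * b i)"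
      by (simp add: contract_sum rank_one_contracted)
    finally show ?thesis
      by simp
  qed
  then have "k \<le> card {..<r}"
    by (intro W_form_decomp_card_ge[where c = 0 and \<gamma> = "\<lambda>_. 1"
          and \<alpha> = "\<lambda>j i. ?f i (us j i)" and \<beta> = "\<lambda>j i. ?g i (us j i)"]) auto
  then show ?thesis
    by simp
qed

lemma trank_W_tensor:
  assumes "\<forall>i<k. lin_indep2 (n i) (v i) (w i)"
  shows "trank k n (W_tensor k v w) = k"
proof (rule antisym)
  define us :: "nat \<Rightarrow> nat \<Rightarrow> nat \<Rightarrow> complex" where "us j = (\<lambda>l. if l = j then w l else v l)" for j
  have W_decomp: "\<forall>idx. valid_idx k n idx \<longrightarrow> W_tensor k v w idx = (\<Sum>j<k. rank_one k (us j) idx)"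
    by (simp add: W_tensor_def us_def)
  then show "trank k n (W_tensor k v w) \<le> k"
    by (rule trank_le)
  from W_decomp obtain us' :: "nat \<Rightarrow> nat \<Rightarrow> nat \<Rightarrow> complex" where
    "\<forall>idx. valid_idx k n idx \<longrightarrow> W_tensor k v w idx = (\<Sum>j<trank k n (W_tensor k v w). rank_one k (us' j) idx)"
    using trank_decomp[OF exI[of _ us]] by blast
  then show "k \<le> trank k n (W_tensor k v w)"
    by (rule W_tensor_decomp_length_ge[OF assms])
qed

lemma W_tensor_minus_rank_one_decomp:
  assumes "k \<ge> 3"
    and span: "\<forall>i<k. \<forall>j<n i. p i j = a i * v i j + b i * w i j"
    and b: "\<forall>i<k. b i \<noteq> 0"
  shows "\<exists>c (us :: nat \<Rightarrow> nat \<Rightarrow> nat \<Rightarrow> complex). \<forall>idx. valid_idx k n idx \<longrightarrow>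
           W_tensor k v w idx - c * rank_one k p idx = (\<Sum>j<k - 1. rank_one k (us j) idx)"
proof -
  define e where "e i = a i / b i" for i
  obtain c \<gamma> \<alpha> \<beta> where decomp: "\<And>V W. W_form k V W - c * (\<Prod>i<k. W i + e i * V i)
      = (\<Sum>j<k - 1. \<gamma> j * (\<Prod>i<k. \<alpha> j i * V i + \<beta> j i * W i))"
    using W_form_minus_prod_decomp[OF assms(1), of e] by blast
  define u where "u j = (\<lambda>i m. \<alpha> j i * v i m + \<beta> j i * w i m)" for j
  define us where "us j = (u j)(0 := (\<lambda>m. \<gamma> j * u j 0 m))" for j
  have "W_tensor k v w idx - c / (\<Prod>i<k. b i) * rank_one k p idx = (\<Sum>j<k - 1. rank_one k (us j) idx)"
    if "valid_idx k n idx" for idx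
  proof -
    define V where "V = (\<lambda>l. v l (idx l))"
    define W where "W = (\<lambda>l. w l (idx l))"
    have "p i (idx i) = b i * (W i + e i * V i)" if "i < k" for i
      using span b \<open>valid_idx k n idx\<close> that by (simp add: valid_idx_def V_def W_def e_def field_simps)
    then have "rank_one k p idx = (\<Prod>i<k. b i) * (\<Prod>i<k. W i + e i * V i)"
      by (simp add: rank_one_def flip: prod.distrib)
    moreover have "rank_one k (us j) idx = \<gamma> j * (\<Prod>i<k. \<alpha> j i * V i + \<beta> j i * W i)" for j
      using smult_rank_one[of k "\<gamma> j" "u j" idx] assms(1)
      by (simp add: us_def rank_one_def u_def V_def W_def)
    moreover have "(\<Prod>i<k. b i) \<noteq> 0"
      using b by simp
    ultimately show ?thesis
      using decomp[of V W] by (simp add: W_tensor_eq_W_form V_def W_def)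
  qed
  then show ?thesis
    by blast
qed

lemma in_span2_not_multiple_coeff:
  assumes "in_span2 m x y z" and "\<not> (\<exists>c. \<forall>j<m. z j = c * x j)"
  shows "\<exists>a b. b \<noteq> 0 \<and> (\<forall>j<m. z j = a * x j + b * y j)"
proof -
  obtain a b where ab: "\<forall>j<m. z j = a * x j + b * y j"
    using assms(1) unfolding in_span2_def by blast
  moreover have "b \<noteq> 0"
  proof
    assume "b = 0"
    with ab have "\<forall>j<m. z j = a * x j"
      by simp
    with assms(2) show False
      by blast
  qed
  ultimately show ?thesis
    by blast
qed

theorem proposition4p6:
  fixes k :: nat and n :: "nat \<Rightarrow> nat"
    and v w p :: "nat \<Rightarrow> nat \<Rightarrow> complex"
  assumes "k \<ge> 3"
    and indep: "\<forall>i<k. lin_indep2 (n i) (v i) (w i)"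
    and pspan: "\<forall>i<k. in_span2 (n i) (v i) (w i) (p i)"
    and pnz: "\<forall>i<k. \<exists>j<n i. p i j \<noteq> 0"
    and pnv: "\<forall>i<k. \<not> (\<exists>c. \<forall>j<n i. p i j = c * v i j)"
  shows "in_decomposition_locus k n
           (\<lambda>idx. \<Sum>i<k. rank_one k (\<lambda>l. if l = i then w l else v l) idx)
           (rank_one k p)"
proof -
  have "\<forall>i. \<exists>a b. i < k \<longrightarrow> b \<noteq> 0 \<and> (\<forall>j<n i. p i j = a * v i j + b * w i j)"
    using in_span2_not_multiple_coeff pspan pnv by blast
  then obtain a b where "\<forall>i<k. b i \<noteq> 0 \<and> (\<forall>j<n i. p i j = a i * v i j + b i * w i j)"
    unfolding choice_iff by auto
  then obtain c us where decomp: "\<forall>idx. valid_idx k n idx \<longrightarrow>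
      W_tensor k v w idx - c * rank_one k p idx = (\<Sum>j<k - 1. rank_one k (us j) idx)"
    using W_tensor_minus_rank_one_decomp[OF assms(1)] by blast
  let ?R = "\<lambda>idx. W_tensor k v w idx - c * rank_one k p idx"
  have "trank k n ?R \<le> k - 1"
    using decomp by (rule trank_le)
  moreover have "k \<le> Suc (trank k n ?R)"
    using trank_le_Suc_trank_minus_rank_one[of k n "W_tensor k v w" c p] decomp assms(1)
      trank_W_tensor[OF indep] by force
  ultimately have "trank k n ?R = trank k n (W_tensor k v w) - 1"
    using trank_W_tensor[OF indep] by simp
  then have "in_decomposition_locus k n (W_tensor k v w) (rank_one k p)"
    unfolding in_decomposition_locus_def by blast
  then show ?thesis
    by (simp only: W_tensor_def)
qed

end
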